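(* In the deterministic crowd-learning system with reward rate $\beta>0$, under selfish user behavior and for any initial condition, the average maximum age satisfies $$\overline{\Delta}_{\max}^{(\beta)}\triangleq\limsup_{T\to\infty}\frac1T\sum_{t=0}^{T-1}\mathbb{E}\Big[\max_n\Delta_n[t]\Big]\le N-1+\frac{p_{\max}}{\beta}.$$
   Context: Deterministic crowd-learning model. There are $N\ge 2$ points of interest (PoIs) and time is slotted, $t=0,1,2,\dots$. Each PoI $n$ has a price $p_n[t]\in[p_{\min},p_{\max}]$ with $0<p_{\min}\le p_{\max}$; the price sequence may be arbitrary. The service provider keeps a recorded price $r_n[t]$ for each PoI, with $r_n[0]\in[p_{\min},p_{\max}]$. Each PoI also has an age $\Delta_n[t]$, with finite initial values. In every slot exactly one user arrives and selects one PoI; we write $S_n[t]=1$ if PoI $n$ is selected and $S_n[t]=0$ otherwise. The selected PoI's record is refreshed: $r_n[t+1]=p_n[t]$ if $S_n[t]=1$, and $r_n[t+1]=r_n[t]$ otherwise. Ages evolve as $$\Delta_n[t+1]=(\Delta_n[t]+1)(1-S_n[t]).$$ Selfish behavior with reward rate $\beta>0$: the user in slot $t$ selects $n^*[t]\in\arg\max_n(\beta\Delta_n[t]-r_n[t])$, with ties broken arbitrarily. *)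

theory Defs
  imports Complex_Main "HOL-Library.Extended_Real" "HOL-Library.Liminf_Limsup"
begin

definition Ssel :: "(nat \<Rightarrow> nat) \<Rightarrow> nat \<Rightarrow> nat \<Rightarrow> nat" where
  "Ssel sel t n = (if sel t = n then 1 else 0)"

end

theory Submission
  imports Defs
begin

text \<open>Suppose PoI \<open>m\<close> is not refreshed during \<open>N\<close> consecutive slots. By pigeonhole some other
  PoI \<open>k\<close> is chosen twice in that window, at \<open>s\<^sub>1 < s\<^sub>2\<close>. At \<open>s\<^sub>2\<close> the age of \<open>k\<close> is
  below \<open>s\<^sub>2 - s\<^sub>1\<close>, whereas \<open>m\<close> has aged by \<open>s\<^sub>2 - s\<^sub>1\<close> since \<open>s\<^sub>1\<close>; since the user preferred \<open>k\<close>,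
  and recorded prices differ by at most \<open>p\<^sub>m\<^sub>a\<^sub>x - p\<^sub>m\<^sub>i\<^sub>n\<close>, the age of \<open>m\<close> at \<open>s\<^sub>1\<close> is at most
  \<open>(p\<^sub>m\<^sub>a\<^sub>x - p\<^sub>m\<^sub>i\<^sub>n)/\<beta> - 1\<close>. Adding the at most \<open>N\<close> further slots gives
  \<open>\<Delta>\<^sub>m[t] \<le> N - 1 + (p\<^sub>m\<^sub>a\<^sub>x - p\<^sub>m\<^sub>i\<^sub>n)/\<beta>\<close> for all \<open>t \<ge> N\<close>, and the time average of a sequence
  that is eventually bounded by \<open>B\<close> has limsup at most \<open>B\<close>.\<close>

lemma limsup_average_le:
  fixes f :: "nat \<Rightarrow> real"
  assumes bounded: "\<And>t. t0 \<le> t \<Longrightarrow> f t \<le> B"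
  shows "limsup (\<lambda>T. ereal (1 / real T * (\<Sum>t<T. f t))) \<le> ereal B"
proof -
  define C where "C = (\<Sum>t<t0. f t) - real t0 * B"
  have partial_sum_le: "(\<Sum>t<T. f t) \<le> C + real T * B" if "t0 \<le> T" for T
  proof -
    have "(\<Sum>t<T. f t) = (\<Sum>t<t0. f t) + (\<Sum>t\<in>{t0..<T}. f t)"
      using that by (metis atLeast0LessThan sum.atLeastLessThan_concat zero_le)
    also have "\<dots> \<le> (\<Sum>t<t0. f t) + (\<Sum>t\<in>{t0..<T}. B)"
      using bounded by (intro add_left_mono sum_mono) auto
    finally show ?thesis
      using that by (simp add: C_def of_nat_diff algebra_simps)
  qed
  have "\<forall>\<^sub>F T in sequentially. ereal (1 / real T * (\<Sum>t<T. f t)) \<le> ereal (C / real T + B)"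
  proof (rule eventually_sequentiallyI[of "Suc t0"])
    fix T assume T: "Suc t0 \<le> T"
    then have "1 / real T * (\<Sum>t<T. f t) \<le> 1 / real T * (C + real T * B)"
      using partial_sum_le by (intro mult_left_mono) auto
    also have "\<dots> = C / real T + B"
      using T by (simp add: field_simps)
    finally show "ereal (1 / real T * (\<Sum>t<T. f t)) \<le> ereal (C / real T + B)"
      by simp
  qed
  then have "limsup (\<lambda>T. ereal (1 / real T * (\<Sum>t<T. f t)))
      \<le> limsup (\<lambda>T. ereal (C / real T + B))"
    by (rule Limsup_mono)
  also have "\<dots> = ereal B"
  proof (rule lim_imp_Limsup)
    have "(\<lambda>T. C / real T + B) \<longlonglongrightarrow> 0 + B"
      by (intro tendsto_add tendsto_divide_0[OF tendsto_const] tendsto_const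
          filterlim_at_top_imp_at_infinity filterlim_real_sequentially)
    then show "(\<lambda>T. ereal (C / real T + B)) \<longlonglongrightarrow> ereal B"
      by (simp add: tendsto_ereal)
  qed simp
  finally show ?thesis .
qed

lemma bounded_records:
  fixes r p :: "nat \<Rightarrow> real"
  assumes "lo \<le> r 0" "r 0 \<le> hi"
    and "\<And>t. lo \<le> p t \<and> p t \<le> hi"
    and "\<And>t. r (Suc t) = (if refresh t then p t else r t)"
  shows "lo \<le> r t \<and> r t \<le> hi"
  using assms by (induction t) auto

locale crowd_ages =
  fixes N :: nat and sel :: "nat \<Rightarrow> nat" and \<Delta> :: "nat \<Rightarrow> nat \<Rightarrow> nat"
  assumes sel_range: "sel t < N"
    and age_Suc: "n < N \<Longrightarrow> \<Delta> (Suc t) n = (if sel t = n then 0 else Suc (\<Delta> t n))"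
begin

lemma age_add_unselected:
  assumes "m < N" "\<And>i. i < j \<Longrightarrow> sel (s + i) \<noteq> m"
  shows "\<Delta> (s + j) m = \<Delta> s m + j"
  using assms(2) by (induction j) (auto simp: age_Suc[OF assms(1)])

lemma age_less_since_selection:
  assumes "n < N" "sel s = n" "s < t"
  shows "\<Delta> t n < t - s"
proof -
  have "Suc s \<le> t" using \<open>s < t\<close> by simp
  then show ?thesis
  proof (induction t rule: dec_induct)
    case base
    show ?case using age_Suc[OF \<open>n < N\<close>, of s] \<open>sel s = n\<close> by simp
  next
    case (step t)
    then show ?case using age_Suc[OF \<open>n < N\<close>, of t] by auto
  qed
qed

lemma repeated_selection_in_window:
  assumes "m < N" "N \<le> t" "\<And>s. s \<in> {t - N..<t} \<Longrightarrow> sel s \<noteq> m"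
  obtains a b where "t - N \<le> a" "a < b" "b < t" "sel a = sel b"
proof -
  have "sel ` {t - N..<t} \<subseteq> {..<N} - {m}"
    using assms(3) sel_range by blast
  then have "card (sel ` {t - N..<t}) \<le> N - 1"
    using \<open>m < N\<close> by (metis card_Diff_singleton card_lessThan card_mono finite_Diff
        finite_lessThan lessThan_iff)
  then have "\<not> inj_on sel {t - N..<t}"
    using \<open>m < N\<close> \<open>N \<le> t\<close> by (intro pigeonhole) simp
  then obtain a b where "a \<in> {t - N..<t}" "b \<in> {t - N..<t}" "a \<noteq> b" "sel a = sel b"
    unfolding inj_on_def by blast
  then show thesis
    using that by (metis atLeastLessThan_iff linorder_neqE_nat)
qed

end

locale selfish_crowd = crowd_ages +
  fixes \<beta> lo hi :: real and r :: "nat \<Rightarrow> nat \<Rightarrow> real"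
  assumes beta_pos: "0 < \<beta>"
    and record_bounds: "n < N \<Longrightarrow> lo \<le> r t n \<and> r t n \<le> hi"
    and selfish: "n < N \<Longrightarrow> \<beta> * real (\<Delta> t n) - r t n \<le> \<beta> * real (\<Delta> t (sel t)) - r t (sel t)"
begin

text \<open>The user at \<open>s\<^sub>2\<close> preferred the PoI chosen at \<open>s\<^sub>1\<close> to \<open>m\<close>, although \<open>m\<close> is older than it by
  more than \<open>\<Delta>\<^sub>m[s\<^sub>1]\<close>; only the price difference can pay for that gap.\<close>

lemma age_before_repeated_selection:
  assumes "m < N" "s1 < s2" "sel s1 = sel s2" "\<And>s. s \<in> {s1..<s2} \<Longrightarrow> sel s \<noteq> m"
  shows "\<beta> * real (\<Delta> s1 m) \<le> hi - lo - \<beta>"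
proof -
  define k where "k = sel s1"
  have "k < N" by (simp add: k_def sel_range)
  have "\<Delta> (s1 + (s2 - s1)) m = \<Delta> s1 m + (s2 - s1)"
    using assms by (intro age_add_unselected) auto
  then have age_m: "real (\<Delta> s2 m) = real (\<Delta> s1 m) + real (s2 - s1)"
    using \<open>s1 < s2\<close> by simp
  have "real (\<Delta> s2 k) \<le> real (s2 - s1) - 1"
    using age_less_since_selection[OF \<open>k < N\<close> k_def[symmetric] \<open>s1 < s2\<close>] by linarith
  then have age_k: "\<beta> * real (\<Delta> s2 k) \<le> \<beta> * (real (s2 - s1) - 1)"
    using beta_pos by simp
  have "\<beta> * real (\<Delta> s2 m) - r s2 m \<le> \<beta> * real (\<Delta> s2 k) - r s2 k"
    using selfish[OF \<open>m < N\<close>, of s2] \<open>sel s1 = sel s2\<close> by (simp add: k_def)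
  then show ?thesis
    using age_m age_k record_bounds[OF \<open>m < N\<close>, of s2] record_bounds[OF \<open>k < N\<close>, of s2]
    by (simp add: algebra_simps)
qed

lemma age_bound:
  assumes "m < N" "N \<le> t"
  shows "real (\<Delta> t m) \<le> real N - 1 + (hi - lo) / \<beta>"
proof (cases "\<Delta> t m < N")
  case True
  have "lo \<le> hi" using record_bounds[OF \<open>m < N\<close>] by (meson order.trans)
  then have "0 \<le> (hi - lo) / \<beta>" using beta_pos by simp
  moreover have "real (\<Delta> t m) + 1 \<le> real N"
    using True by (metis Suc_leI of_nat_Suc of_nat_le_iff add.commute)
  ultimately show ?thesis by linarith
next
  case False
  have unselected: "sel s \<noteq> m" if "s \<in> {t - N..<t}" for s
    using that False age_less_since_selection[OF \<open>m < N\<close>, of s t] by auto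
  obtain a b where ab: "t - N \<le> a" "a < b" "b < t" "sel a = sel b"
    using repeated_selection_in_window[OF \<open>m < N\<close> \<open>N \<le> t\<close> unselected] .
  have age_a: "\<beta> * real (\<Delta> a m) \<le> hi - lo - \<beta>"
    using ab unselected by (intro age_before_repeated_selection[OF \<open>m < N\<close> \<open>a < b\<close>]) auto
  have "\<Delta> (a + (t - a)) m = \<Delta> a m + (t - a)"
    using ab unselected by (intro age_add_unselected[OF \<open>m < N\<close>]) auto
  then have "real (\<Delta> t m) \<le> real (\<Delta> a m) + real N"
    using ab by simp
  then have "\<beta> * real (\<Delta> t m) \<le> \<beta> * real (\<Delta> a m) + \<beta> * real N"
    using beta_pos by (metis distrib_left less_eq_real_def mult_left_mono)
  with age_a have "\<beta> * real (\<Delta> t m) \<le> \<beta> * (real N - 1) + (hi - lo)"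
    by (simp add: algebra_simps)
  then show ?thesis
    using beta_pos by (simp add: field_simps)
qed

end

theorem mainTheorem2:
  fixes N :: nat and pmin pmax \<beta> :: real
    and p :: "nat \<Rightarrow> nat \<Rightarrow> real"   (* p t n = p_n[t] *)
    and r :: "nat \<Rightarrow> nat \<Rightarrow> real"   (* r t n = r_n[t] *)
    and \<Delta> :: "nat \<Rightarrow> nat \<Rightarrow> nat"   (* \<Delta> t n = \<Delta>_n[t] *)
    and sel :: "nat \<Rightarrow> nat"           (* PoI chosen by the user of slot t *)
  assumes N: "N \<ge> 2"
    and pmin: "0 < pmin" and pminmax: "pmin \<le> pmax"
    and beta: "\<beta> > 0"
    and prices: "\<And>t n. n < N \<Longrightarrow> pmin \<le> p t n \<and> p t n \<le> pmax"
    and r0: "\<And>n. n < N \<Longrightarrow> pmin \<le> r 0 n \<and> r 0 n \<le> pmax"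
    and sel_range: "\<And>t. sel t < N"
    and selfish: "\<And>t n. n < N \<Longrightarrow>
        \<beta> * real (\<Delta> t n) - r t n \<le> \<beta> * real (\<Delta> t (sel t)) - r t (sel t)"
    and r_step: "\<And>t n. n < N \<Longrightarrow>
        r (Suc t) n = (if Ssel sel t n = 1 then p t n else r t n)"
    and age_step: "\<And>t n. n < N \<Longrightarrow>
        \<Delta> (Suc t) n = (\<Delta> t n + 1) * (1 - Ssel sel t n)"
  shows "limsup (\<lambda>T. ereal ((1 / real T) *
            (\<Sum>t<T. Max ((\<lambda>n. real (\<Delta> t n)) ` {..<N}))))
         \<le> ereal (real N - 1 + pmax / \<beta>)"
proof -
  have records: "pmin \<le> r t n \<and> r t n \<le> pmax" if "n < N" for t n
    using r0[OF that] prices[OF that] r_step[OF that] by (intro bounded_records) auto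
  interpret selfish_crowd N sel \<Delta> \<beta> pmin pmax r
    using sel_range age_step beta records selfish by unfold_locales (auto simp: Ssel_def)
  have age_le: "real (\<Delta> t n) \<le> real N - 1 + pmax / \<beta>" if "N \<le> t" "n < N" for t n
  proof -
    have "(pmax - pmin) / \<beta> \<le> pmax / \<beta>"
      using pmin beta by (simp add: divide_right_mono)
    then show ?thesis
      using age_bound[OF \<open>n < N\<close> \<open>N \<le> t\<close>] by linarith
  qed
  have "Max ((\<lambda>n. real (\<Delta> t n)) ` {..<N}) \<le> real N - 1 + pmax / \<beta>" if "N \<le> t" for t
    using N age_le[OF that] by (simp add: Max_le_iff lessThan_empty_iff)
  then show ?thesis
    by (rule limsup_average_le)
qed

end
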